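(* Let $(Z,d,\nu)$ be a metric measure space satisfying the LLC-1 condition, where $\nu$ is a doubling Borel regular measure. Let $E\subset Z$ be a bounded measurable set, and suppose that there exists $t>0$ such that $\overline{\mathcal{M}}^{-t}(\partial^+E)<\infty$. Then $\chi_E\in B^s_{1,1}(Z)$ for every $s\in(0,1)$ with $s<t$.
   Context: A measure $\nu$ is doubling if there is $C_\nu\ge1$ with $0<\nu(B(x,2r))\le C_\nu\,\nu(B(x,r))<\infty$ for all $x\in Z$, $r>0$. $Z$ satisfies the LLC-1 condition if there is $C_L\ge1$ such that for all $x\in Z$ and $r>0$, any two points of $B(x,r)$ can be joined by a connected set contained in $B(x,C_Lr)$. The regularized boundary $\partial^+E$ is the set of $x\in Z$ such that $\nu(B(x,r)\cap E)>0$ and $\nu(B(x,r)\setminus E)>0$ for all $r>0$. For $A\subset Z$, $t>0$, $r>0$, the codimension $t$ Minkowski $r$-content is $\mathcal{M}^{-t}_r(A)=\inf\{r^{-t}\sum_i\nu(B(x_i,r)): A\subset\bigcup_i B(x_i,r),\ x_i\in A\}$ (countable covers), and the codimension $t$ upper Minkowski content is $\overline{\mathcal{M}}^{-t}(A)=\limsup_{r\to0^+}\mathcal{M}^{-t}_r(A)$. For $0<s<1$, the Besov space $B^s_{1,1}(Z)$ consists of those $u\in L^1(Z)$ with $\|u\|_{B^s_{1,1}(Z)}=\int_Z\int_Z\frac{|u(y)-u(x)|}{d(x,y)^s\,\nu(B(x,d(x,y)))}\,d\nu(y)\,d\nu(x)<\infty$. *)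

theory Defs
  imports "HOL-Analysis.Analysis"
begin

definition doubling_measure :: "'a::metric_space measure \<Rightarrow> bool" where
  "doubling_measure M \<longleftrightarrow> (\<exists>C::real. C \<ge> 1 \<and>
     (\<forall>x r. r > 0 \<longrightarrow> 0 < emeasure M (ball x (2*r)) \<and>
        emeasure M (ball x (2*r)) \<le> ennreal C * emeasure M (ball x r) \<and>
        emeasure M (ball x r) < \<infinity>))"

definition borel_regular :: "'a::metric_space measure \<Rightarrow> bool" where
  "borel_regular M \<longleftrightarrow> space M = UNIV \<and> sets borel \<subseteq> sets M \<and>
     (\<forall>A\<in>sets M. \<exists>B\<in>sets borel. A \<subseteq> B \<and> emeasure M A = emeasure M B)"

definition LLC1 :: "'a::metric_space set \<Rightarrow> bool" where
  "LLC1 Z \<longleftrightarrow> (\<exists>CL::real. CL \<ge> 1 \<and>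
     (\<forall>x\<in>Z. \<forall>r>0. \<forall>y\<in>ball x r \<inter> Z. \<forall>z\<in>ball x r \<inter> Z.
        \<exists>K. connected K \<and> y \<in> K \<and> z \<in> K \<and> K \<subseteq> ball x (CL*r) \<inter> Z))"

definition reg_boundary :: "'a::metric_space measure \<Rightarrow> 'a set \<Rightarrow> 'a set" where
  "reg_boundary M E = {x. \<forall>r>0. emeasure M (ball x r \<inter> E) > 0 \<and> emeasure M (ball x r - E) > 0}"

definition minkowski_r_content :: "'a::metric_space measure \<Rightarrow> real \<Rightarrow> real \<Rightarrow> 'a set \<Rightarrow> ennreal" where
  "minkowski_r_content M t r A =
     (INF X \<in> {X. countable X \<and> X \<subseteq> A \<and> A \<subseteq> (\<Union>x\<in>X. ball x r)}.
        ennreal (r powr (-t)) * (\<integral>\<^sup>+ x. emeasure M (ball x r) \<partial>count_space X))"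

definition upper_minkowski_content :: "'a::metric_space measure \<Rightarrow> real \<Rightarrow> 'a set \<Rightarrow> ennreal" where
  "upper_minkowski_content M t A = Limsup (at_right 0) (\<lambda>r. minkowski_r_content M t r A)"

definition besov_norm :: "'a::metric_space measure \<Rightarrow> real \<Rightarrow> ('a \<Rightarrow> real) \<Rightarrow> ennreal" where
  "besov_norm M s u = (\<integral>\<^sup>+ x. (\<integral>\<^sup>+ y. ennreal \<bar>u y - u x\<bar> /
        (ennreal (dist x y powr s) * emeasure M (ball x (dist x y))) \<partial>M) \<partial>M)"

definition in_besov :: "'a::metric_space measure \<Rightarrow> real \<Rightarrow> ('a \<Rightarrow> real) \<Rightarrow> bool" where
  "in_besov M s u \<longleftrightarrow> integrable M u \<and> besov_norm M s u < \<infinity>"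

end

theory Submission
  imports Defs
begin

text \<open>
  Almost every point x is a density point of the side of E containing it: every ball around x
  meets that side in positive measure. If such an x lies at distance at least CL r from the
  regularized boundary, then every density point y on the other side satisfies d(x,y) \<ge> r,
  because by LLC-1 a continuum joining x and y inside B(x, CL r) would have to cross the
  boundary. Splitting {y. d(x,y) \<ge> r} into dyadic annuli and using doubling, the inner Besov
  integral at x is then O(r^-s). Hence the points at distance about CL 2^-k from the boundary
  contribute O(2^(ks)) times the measure of the 2^-k-neighbourhood of the boundary, which is
  O(2^(-kt)) by the Minkowski content bound; the series converges because s < t. Far from the
  bounded set E the inner integral is a multiple of mu(E) d(x0,x)^-s / mu(B(x0, d(x0,x))),
  which is integrable by the same annulus estimate.
\<close>

lemma connected_not_subset_Un_disjoint_open: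
  assumes "open U" "open V" "U \<inter> V = {}" "connected K"
    and "x \<in> K" "x \<notin> U" "y \<in> K" "y \<notin> V"
  shows "\<not> K \<subseteq> U \<union> V"
  using connectedD[OF assms(4,1,2)] assms(3,5-8) by blast

lemma suminf_le_geometric_ennreal:
  fixes f :: "nat \<Rightarrow> ennreal"
  assumes "\<And>j. f j \<le> ennreal (a * q ^ j)" "0 \<le> a" "0 \<le> q" "q < 1"
  shows "suminf f \<le> ennreal (a / (1 - q))"
proof -
  have "suminf f \<le> (\<Sum>j. ennreal (a * q ^ j))"
    using assms(1) by (intro suminf_le) auto
  also have "\<dots> = ennreal (\<Sum>j. a * q ^ j)"
    using assms by (intro suminf_ennreal2 summable_mult summable_geometric) auto
  also have "(\<Sum>j. a * q ^ j) = a / (1 - q)"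
    using assms by (simp add: suminf_mult suminf_geometric)
  finally show ?thesis .
qed

lemma ennreal_le_suminf: "(f :: nat \<Rightarrow> ennreal) i \<le> suminf f"
  by (meson ennreal_suminf_lessD not_le order.irrefl)

lemma suminf_ennreal_ge_one_eq_top:
  assumes "\<And>k. 1 \<le> f k"
  shows "(\<Sum>k. ennreal (f k)) = \<infinity>"
proof -
  have "\<not> summable f"
    using summable_LIMSEQ_zero[THEN order_tendstoD(2), of f 1] assms
    by (metis eventually_sequentially le_refl linorder_not_less zero_less_one)
  moreover have "0 \<le> f k" for k
    using assms[of k] by linarith
  ultimately have "(\<Sum>k. ennreal (f k)) = top"
    by (intro summable_iff_suminf_neq_top)
  then show ?thesis
    by simp
qed

lemma dyadic_scale_exists:
  fixes r d :: real
  assumes "0 < r" "r \<le> d"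
  obtains j :: nat where "2 ^ j * r \<le> d" "d < 2 ^ Suc j * r"
proof -
  obtain n :: nat where "d / r < 2 ^ n"
    using real_arch_pow[of 2 "d / r"] by auto
  then have "\<exists>n. d < 2 ^ n * r"
    using assms by (auto simp: field_simps)
  from exists_least_lemma[where P = "\<lambda>n. d < 2 ^ n * r", OF _ this]
  obtain j where "\<not> d < 2 ^ j * r" "d < 2 ^ Suc j * r"
    using assms by auto
  then show ?thesis
    using that by (simp add: not_less)
qed

lemma powr_power2: "(2 ^ j :: real) powr a = (2 powr a) ^ j"
  by (simp add: powr_power powr_powr_swap flip: powr_realpow)

lemma ball_subset_ball_dist: "dist x y + r \<le> r' \<Longrightarrow> ball y r \<subseteq> ball x r'"
proof
  fix z assume "dist x y + r \<le> r'" "z \<in> ball y r"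
  then show "z \<in> ball x r'"
    using dist_triangle[of x z y] by simp
qed

definition locally_null :: "'a::metric_space measure \<Rightarrow> 'a set \<Rightarrow> 'a set" where
  "locally_null M T = {z. \<exists>r>0. emeasure M (ball z r \<inter> T) = 0}"

definition thickening :: "'a::metric_space set \<Rightarrow> real \<Rightarrow> 'a set" where
  "thickening A \<rho> = (\<Union>a\<in>A. ball a \<rho>)"

lemma open_thickening: "open (thickening A \<rho>)"
  unfolding thickening_def by auto

definition separated :: "real \<Rightarrow> 'a::metric_space set \<Rightarrow> bool" where
  "separated \<epsilon> T \<longleftrightarrow> (\<forall>p\<in>T. \<forall>q\<in>T. p \<noteq> q \<longrightarrow> \<epsilon> \<le> dist p q)"

lemma reg_boundary_eq_locally_null:
  "reg_boundary M E = - (locally_null M E \<union> locally_null M (- E))"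
  unfolding reg_boundary_def locally_null_def by (auto simp: Diff_eq zero_less_iff_neq_zero)

lemma reg_boundary_Compl: "reg_boundary M (- E) = reg_boundary M E"
  unfolding reg_boundary_eq_locally_null by auto

lemma emeasure_countable_Union_le:
  assumes "countable X" "\<And>x. x \<in> X \<Longrightarrow> A x \<in> sets M"
  shows "emeasure M (\<Union>x\<in>X. A x) \<le> (\<integral>\<^sup>+x. emeasure M (A x) \<partial>count_space X)"
proof -
  have "emeasure M (\<Union>x\<in>X. A x) = (\<integral>\<^sup>+y. indicator (\<Union>x\<in>X. A x) y \<partial>M)"
    using assms by (subst nn_integral_indicator) (auto intro: sets.countable_UN')
  also have "\<dots> \<le> (\<integral>\<^sup>+y. \<integral>\<^sup>+x. indicator (A x) y \<partial>count_space X \<partial>M)"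
  proof (intro nn_integral_mono)
    fix y
    show "indicator (\<Union>x\<in>X. A x) y \<le> (\<integral>\<^sup>+x. indicator (A x) y \<partial>count_space X)"
    proof (cases "y \<in> (\<Union>x\<in>X. A x)")
      case True
      then obtain x where "x \<in> X" "y \<in> A x" by auto
      then show ?thesis
        using nn_integral_ge_point[of x X "\<lambda>x. indicator (A x) y"] True by simp
    qed simp
  qed
  also have "\<dots> = (\<integral>\<^sup>+x. \<integral>\<^sup>+y. indicator (A x) y \<partial>M \<partial>count_space X)"
    using assms by (intro nn_integral_count_space_nn_integral) auto
  also have "\<dots> = (\<integral>\<^sup>+x. emeasure M (A x) \<partial>count_space X)"
    using assms by (intro nn_integral_cong) auto
  finally show ?thesis .
qed

lemma suminf_dyadic_layers_finite:
  fixes f :: "real \<Rightarrow> ennreal"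
  assumes "s < t" "0 < c" "0 < \<rho>0" "0 \<le> K"
    and finite: "\<And>\<rho>. 0 < \<rho> \<Longrightarrow> f \<rho> < \<infinity>"
    and small: "\<And>\<rho>. 0 < \<rho> \<Longrightarrow> \<rho> < \<rho>0 \<Longrightarrow> f \<rho> \<le> ennreal (K * \<rho> powr t)"
  shows "(\<Sum>k. ennreal ((2 ^ k) powr s) * f (c / 2 ^ k)) < \<infinity>"
proof -
  let ?a = "\<lambda>k::nat. ennreal ((2 ^ k) powr s) * f (c / 2 ^ k)"
  obtain k0 :: nat where k0: "c / \<rho>0 < 2 ^ k0"
    using real_arch_pow[of 2 "c / \<rho>0"] by auto
  define q :: real where "q = 2 powr (s - t)"
  have q: "0 \<le> q" "q < 1"
    using assms(1) by (auto simp: q_def powr_less_one)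
  have "?a (k + k0) \<le> ennreal (K * c powr t * q ^ k)" for k
  proof -
    define \<rho> where "\<rho> = c / 2 ^ (k + k0)"
    have "\<rho> \<le> c / 2 ^ k0"
      using assms(2) unfolding \<rho>_def by (intro divide_left_mono) (auto simp: power_add)
    also have "\<dots> < \<rho>0"
      using k0 assms(3) by (simp add: field_simps)
    finally have "f \<rho> \<le> ennreal (K * \<rho> powr t)"
      using assms(2) by (intro small) (auto simp: \<rho>_def)
    then have "?a (k + k0) \<le> ennreal ((2 ^ (k + k0)) powr s) * ennreal (K * \<rho> powr t)"
      unfolding \<rho>_def by (rule mult_left_mono) simp
    also have "\<dots> = ennreal (K * c powr t * q ^ (k + k0))"
      using assms(2,4)
      by (simp add: \<rho>_def q_def ennreal_mult'' [symmetric] powr_divide powr_power2 powr_diff power_divide)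
    also have "\<dots> \<le> ennreal (K * c powr t * q ^ k)"
      using q assms(4) by (intro ennreal_leI mult_left_mono power_decreasing) auto
    finally show ?thesis .
  qed
  then have "(\<Sum>k. ?a (k + k0)) \<le> ennreal (K * c powr t / (1 - q))"
    using q assms(4) by (intro suminf_le_geometric_ennreal) auto
  then have "(\<Sum>k. ?a (k + k0)) < \<infinity>"
    by (rule le_less_trans) simp
  moreover have "(\<Sum>k<k0. ?a k) < \<infinity>"
    using finite assms(2) by (simp add: ennreal_mult_less_top)
  ultimately show ?thesis
    using suminf_offset[of ?a k0] by (simp add: less_top)
qed

lemma thickening_subset_ball:
  "A \<subseteq> ball x0 R \<Longrightarrow> thickening A \<rho> \<subseteq> ball x0 (R + \<rho>)"
  unfolding thickening_def by (intro UN_least ball_subset_ball_dist) (auto simp: subset_iff)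

lemma reg_boundary_subset_thickening:
  assumes "0 < r"
  shows "reg_boundary M E \<subseteq> thickening E r"
proof
  fix z assume "z \<in> reg_boundary M E"
  then have "0 < emeasure M (ball z r \<inter> E)"
    using assms unfolding reg_boundary_def by auto
  then obtain e where "e \<in> E" "dist z e < r"
    by (metis all_not_in_conv emeasure_empty less_irrefl IntE mem_ball)
  then show "z \<in> thickening E r"
    unfolding thickening_def by (auto simp: dist_commute)
qed

section \<open>Doubling metric measure spaces\<close>

locale doubling_metric_measure =
  fixes M :: "'a::metric_space measure" and C :: real
  assumes space_eq: "space M = UNIV"
    and sets_borel: "sets borel \<subseteq> sets M"
    and C_ge_1: "1 \<le> C"
    and emeasure_ball_double:
      "\<And>x r. 0 < r \<Longrightarrow> emeasure M (ball x (2 * r)) \<le> ennreal C * emeasure M (ball x r)"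
    and emeasure_ball_pos: "\<And>x r. 0 < r \<Longrightarrow> 0 < emeasure M (ball x r)"
    and emeasure_ball_finite: "\<And>x r. emeasure M (ball x r) < \<infinity>"

lemma doubling_metric_measureI:
  assumes "doubling_measure M" "borel_regular M"
  obtains C where "doubling_metric_measure M C"
proof -
  obtain C where C: "1 \<le> C" and dbl: "\<And>x r. 0 < r \<Longrightarrow> 0 < emeasure M (ball x (2 * r)) \<and>
      emeasure M (ball x (2 * r)) \<le> ennreal C * emeasure M (ball x r) \<and> emeasure M (ball x r) < \<infinity>"
    using assms(1) unfolding doubling_measure_def by blast
  have "emeasure M (ball x r) < \<infinity>" for x r
    using dbl[of r x] by (cases "0 < r") (auto simp: not_less ball_empty)
  moreover have "0 < emeasure M (ball x r)" if "0 < r" for x r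
    using dbl[of "r / 2" x] that by simp
  ultimately have "doubling_metric_measure M C"
    using assms(2) C dbl unfolding borel_regular_def by unfold_locales auto
  then show ?thesis ..
qed

context doubling_metric_measure
begin

lemma borel_measurable_of_borel:
  "f \<in> borel_measurable borel \<Longrightarrow> f \<in> borel_measurable M"
  using sets_borel space_eq by (auto simp: measurable_def)

lemma sets_open: "open S \<Longrightarrow> S \<in> sets M"
  using sets_borel by auto

lemma sets_ball [simp, measurable]: "ball x r \<in> sets M"
  by (simp add: sets_open)

lemma sets_Compl: "E \<in> sets M \<Longrightarrow> - E \<in> sets M"
  using sets.compl_sets[of E M] by (simp add: space_eq Compl_eq_Diff_UNIV)

lemma emeasure_subset_ball_finite: "E \<subseteq> ball x0 R \<Longrightarrow> emeasure M E < \<infinity>"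
  using emeasure_mono[OF _ sets_ball] emeasure_ball_finite le_less_trans by blast

definition ball_measure :: "'a \<Rightarrow> real \<Rightarrow> real" where
  "ball_measure x r = measure M (ball x r)"

lemma emeasure_ball_eq: "emeasure M (ball x r) = ennreal (ball_measure x r)"
  using emeasure_ball_finite[of x r]
  by (simp add: ball_measure_def emeasure_eq_ennreal_measure less_top)

lemma ball_measure_nonneg: "0 \<le> ball_measure x r"
  by (simp add: ball_measure_def)

lemma ball_measure_pos: "0 < r \<Longrightarrow> 0 < ball_measure x r"
  using emeasure_ball_pos[of r x] by (simp add: emeasure_ball_eq)

lemma ball_measure_subset: "ball x r \<subseteq> ball y r' \<Longrightarrow> ball_measure x r \<le> ball_measure y r'"
  using emeasure_mono[of "ball x r" "ball y r'" M]
  by (simp add: emeasure_ball_eq ennreal_le_iff ball_measure_nonneg)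

lemma ball_measure_mono: "mono (ball_measure x)"
  by (intro monoI ball_measure_subset) auto

lemma ball_measure_le: "r \<le> r' \<Longrightarrow> ball_measure x r \<le> ball_measure x r'"
  using ball_measure_mono by (rule monoD)

lemma ball_measure_double: "0 < r \<Longrightarrow> ball_measure x (2 * r) \<le> C * ball_measure x r"
  using emeasure_ball_double[of r x] C_ge_1 ball_measure_nonneg
  by (simp add: emeasure_ball_eq ennreal_mult'[symmetric] ennreal_le_iff)

lemma ball_measure_double_power: "0 < r \<Longrightarrow> ball_measure x (2 ^ k * r) \<le> C ^ k * ball_measure x r"
proof (induction k)
  case (Suc k)
  have "ball_measure x (2 ^ Suc k * r) \<le> C * ball_measure x (2 ^ k * r)"
    using ball_measure_double[of "2 ^ k * r" x] Suc.prems by (simp add: mult.assoc)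
  also have "\<dots> \<le> C * (C ^ k * ball_measure x r)"
    using Suc C_ge_1 by (intro mult_left_mono) auto
  finally show ?case by (simp add: mult.assoc)
qed simp

definition besov_weight :: "real \<Rightarrow> 'a \<Rightarrow> real \<Rightarrow> real" where
  "besov_weight s x \<rho> = 1 / (\<rho> powr s * ball_measure x \<rho>)"

lemma besov_weight_nonneg: "0 \<le> besov_weight s x \<rho>"
  by (simp add: besov_weight_def ball_measure_nonneg)

lemma besov_weight_antimono:
  assumes "0 < \<rho>" "\<rho> \<le> \<rho>'" "0 \<le> s"
  shows "besov_weight s x \<rho>' \<le> besov_weight s x \<rho>"
  unfolding besov_weight_def
  using assms ball_measure_pos[of \<rho> x] ball_measure_le[of \<rho> \<rho>' x]
  by (intro divide_left_mono mult_mono powr_mono2 mult_pos_pos) auto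

lemma besov_norm_eq_weight:
  "besov_norm M s u = (\<integral>\<^sup>+x. \<integral>\<^sup>+y. ennreal (\<bar>u y - u x\<bar> * besov_weight s x (dist x y)) \<partial>M \<partial>M)"
  unfolding besov_norm_def
proof (intro nn_integral_cong)
  fix x y :: 'a
  show "ennreal \<bar>u y - u x\<bar> / (ennreal (dist x y powr s) * emeasure M (ball x (dist x y)))
      = ennreal (\<bar>u y - u x\<bar> * besov_weight s x (dist x y))"
  proof (cases "x = y")
    case False
    then have "0 < dist x y powr s * ball_measure x (dist x y)"
      using ball_measure_pos[of "dist x y" x] by simp
    then show ?thesis
      by (simp add: emeasure_ball_eq besov_weight_def ball_measure_nonneg ennreal_mult[symmetric]
          divide_ennreal)
  qed (simp add: besov_weight_def)
qed

definition jump_integral :: "'a set \<Rightarrow> real \<Rightarrow> 'a \<Rightarrow> ennreal" where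
  "jump_integral E s x =
    (\<integral>\<^sup>+y. ennreal (\<bar>indicator E y - indicator E x\<bar> * besov_weight s x (dist x y)) \<partial>M)"

lemma borel_measurable_besov_weight_dist:
  "(\<lambda>y. besov_weight s x (dist x y)) \<in> borel_measurable M"
proof -
  have [measurable]: "ball_measure x \<in> borel_measurable borel"
    using ball_measure_mono by (rule borel_measurable_mono)
  have "besov_weight s x \<in> borel_measurable borel"
    unfolding besov_weight_def by measurable
  moreover have "(\<lambda>y. dist x y) \<in> borel_measurable borel"
    by (intro borel_measurable_continuous_onI continuous_intros)
  ultimately show ?thesis
    by (rule borel_measurable_of_borel[OF measurable_compose, rotated])
qed

lemma nn_integral_besov_weight_tail:
  assumes "0 < r" "0 < s"
  shows "(\<integral>\<^sup>+y. indicator (- ball x r) y * ennreal (besov_weight s x (dist x y)) \<partial>M)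
      \<le> ennreal (C * r powr (-s) / (1 - 2 powr (-s)))"
proof -
  let ?w = "\<lambda>j::nat. ennreal (besov_weight s x (2 ^ j * r))"
  have "indicator (- ball x r) y * ennreal (besov_weight s x (dist x y))
      \<le> (\<Sum>j. ?w j * indicator (ball x (2 ^ Suc j * r)) y)" for y
  proof (cases "r \<le> dist x y")
    case True
    then obtain j where j: "2 ^ j * r \<le> dist x y" "dist x y < 2 ^ Suc j * r"
      using dyadic_scale_exists assms(1) by blast
    have "besov_weight s x (dist x y) \<le> besov_weight s x (2 ^ j * r)"
      using j assms by (intro besov_weight_antimono) auto
    then have "indicator (- ball x r) y * ennreal (besov_weight s x (dist x y))
        \<le> ?w j * indicator (ball x (2 ^ Suc j * r)) y"
      using True j by (simp add: ennreal_leI del: power_Suc)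
    also have "\<dots> \<le> (\<Sum>j. ?w j * indicator (ball x (2 ^ Suc j * r)) y)"
      by (rule ennreal_le_suminf)
    finally show ?thesis .
  qed simp
  then have "(\<integral>\<^sup>+y. indicator (- ball x r) y * ennreal (besov_weight s x (dist x y)) \<partial>M)
      \<le> (\<integral>\<^sup>+y. (\<Sum>j. ?w j * indicator (ball x (2 ^ Suc j * r)) y) \<partial>M)"
    by (intro nn_integral_mono)
  also have "\<dots> = (\<Sum>j. ?w j * emeasure M (ball x (2 ^ Suc j * r)))"
    by (subst nn_integral_suminf) (auto simp: nn_integral_cmult_indicator)
  also have "\<dots> \<le> ennreal (C * r powr (-s) / (1 - 2 powr (-s)))"
  proof (rule suminf_le_geometric_ennreal)
    fix j :: nat
    define \<rho> where "\<rho> = 2 ^ j * r"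
    have \<rho>: "0 < \<rho>"
      using assms by (simp add: \<rho>_def)
    have "besov_weight s x \<rho> * ball_measure x (2 * \<rho>) \<le> besov_weight s x \<rho> * (C * ball_measure x \<rho>)"
      using ball_measure_double[OF \<rho>] besov_weight_nonneg by (rule mult_left_mono)
    also have "\<dots> = C * \<rho> powr (-s)"
      using ball_measure_pos[OF \<rho>, of x] \<rho> by (simp add: besov_weight_def powr_minus field_simps)
    also have "\<dots> = C * r powr (-s) * (2 powr (-s)) ^ j"
      using assms by (simp add: \<rho>_def powr_mult powr_power2)
    moreover have "2 ^ Suc j * r = 2 * \<rho>"
      by (simp add: \<rho>_def)
    ultimately show "?w j * emeasure M (ball x (2 ^ Suc j * r)) \<le> ennreal (C * r powr (-s) * (2 powr (-s)) ^ j)"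
      unfolding \<rho>_def[symmetric]
      by (simp add: emeasure_ball_eq besov_weight_nonneg ennreal_mult'[symmetric] ennreal_leI del: power_Suc)
  qed (use assms C_ge_1 in \<open>auto simp: powr_minus divide_simps\<close>)
  finally show ?thesis .
qed

lemma besov_weight_le_far:
  assumes "0 \<le> s" "x \<noteq> x0" "2 * dist x0 y \<le> dist x0 x"
  shows "besov_weight s x (dist x y) \<le> 2 powr s * C\<^sup>2 * besov_weight s x0 (dist x0 x)"
proof -
  define \<rho> d where "\<rho> = dist x0 x" and "d = dist x y"
  have \<rho>: "0 < \<rho>"
    using assms(2) by (simp add: \<rho>_def)
  have d: "\<rho> / 2 \<le> d"
    using assms(3) dist_triangle[of x0 x y] by (simp add: \<rho>_def d_def dist_commute)
  have "ball x0 \<rho> \<subseteq> ball x (2 ^ 2 * (\<rho> / 2))"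
    by (intro ball_subset_ball_dist) (simp add: \<rho>_def dist_commute)
  then have "ball_measure x0 \<rho> \<le> ball_measure x (2 ^ 2 * (\<rho> / 2))"
    by (rule ball_measure_subset)
  also have "\<dots> \<le> C\<^sup>2 * ball_measure x (\<rho> / 2)"
    using \<rho> by (intro ball_measure_double_power) simp
  also have "\<dots> \<le> C\<^sup>2 * ball_measure x d"
    using d by (intro mult_left_mono ball_measure_le) auto
  finally have m: "ball_measure x0 \<rho> \<le> C\<^sup>2 * ball_measure x d" .
  have "\<rho> powr s = 2 powr s * (\<rho> / 2) powr s"
    using \<rho> by (simp add: powr_divide)
  also have "\<dots> \<le> 2 powr s * d powr s"
    using d \<rho> assms(1) by (intro mult_left_mono powr_mono2) auto
  finally have p: "\<rho> powr s \<le> 2 powr s * d powr s" .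
  have "\<rho> powr s * ball_measure x0 \<rho> \<le> 2 powr s * C\<^sup>2 * (d powr s * ball_measure x d)"
    using mult_mono[OF p m] \<rho> ball_measure_nonneg by (simp add: ac_simps)
  moreover have "0 < \<rho> powr s * ball_measure x0 \<rho>"
    using \<rho> ball_measure_pos by simp
  moreover have "0 < 2 powr s * C\<^sup>2"
    using C_ge_1 by simp
  ultimately have "2 powr s * C\<^sup>2 / (2 powr s * C\<^sup>2 * (d powr s * ball_measure x d))
      \<le> 2 powr s * C\<^sup>2 / (\<rho> powr s * ball_measure x0 \<rho>)"
    by (intro frac_le) auto
  then show ?thesis
    using C_ge_1 unfolding besov_weight_def d_def[symmetric] \<rho>_def[symmetric] by simp
qed

lemma jump_integral_far_le:
  assumes "E \<in> sets M" "E \<subseteq> ball x0 R" "2 * R \<le> dist x0 x" "0 \<le> s"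
  shows "jump_integral E s x
    \<le> ennreal (2 powr s * C\<^sup>2 * besov_weight s x0 (dist x0 x)) * emeasure M E"
proof -
  let ?Q = "2 powr s * C\<^sup>2 * besov_weight s x0 (dist x0 x)"
  have "x \<notin> E"
  proof
    assume "x \<in> E"
    then have "dist x0 x < R"
      using assms(2) by auto
    then show False
      using assms(3) zero_le_dist[of x0 x] by linarith
  qed
  have "ennreal (\<bar>indicator E y - indicator E x\<bar> * besov_weight s x (dist x y)) \<le> ennreal ?Q * indicator E y"
    for y
  proof (cases "y \<in> E")
    case True
    then have "dist x0 y < R"
      using assms(2) by auto
    moreover from this have "0 < R"
      using zero_le_dist[of x0 y] by linarith
    ultimately have "x \<noteq> x0" "2 * dist x0 y \<le> dist x0 x"
      using assms(3) by auto
    then show ?thesis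
      using True \<open>x \<notin> E\<close> besov_weight_le_far[OF assms(4)] by (simp add: ennreal_leI)
  qed (use \<open>x \<notin> E\<close> in \<open>simp add: indicator_def\<close>)
  then have "jump_integral E s x \<le> (\<integral>\<^sup>+y. ennreal ?Q * indicator E y \<partial>M)"
    unfolding jump_integral_def by (intro nn_integral_mono)
  then show ?thesis
    using assms(1) by (simp add: nn_integral_cmult_indicator)
qed

subsection \<open>Density points\<close>

lemma card_separated_le:
  fixes x0 :: 'a
  assumes "0 < R" "0 < \<epsilon>"
  obtains N :: real where
    "\<And>T. finite T \<Longrightarrow> T \<subseteq> ball x0 R \<Longrightarrow> separated \<epsilon> T \<Longrightarrow> real (card T) \<le> N"
proof -
  obtain k :: nat where k: "2 * R / (\<epsilon> / 2) < 2 ^ k"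
    using real_arch_pow[of 2] by auto
  have "real (card T) \<le> ball_measure x0 (R + \<epsilon>) * C ^ k / ball_measure x0 R"
    if T: "finite T" "T \<subseteq> ball x0 R" "separated \<epsilon> T" for T
  proof -
    have lower: "ball_measure x0 R \<le> C ^ k * ball_measure p (\<epsilon> / 2)" if "p \<in> T" for p
    proof -
      have "ball x0 R \<subseteq> ball p (2 ^ k * (\<epsilon> / 2))"
        using \<open>p \<in> T\<close> T(2) k assms
        by (intro ball_subset_ball_dist) (auto simp: dist_commute field_simps)
      then have "ball_measure x0 R \<le> ball_measure p (2 ^ k * (\<epsilon> / 2))"
        by (rule ball_measure_subset)
      also have "\<dots> \<le> C ^ k * ball_measure p (\<epsilon> / 2)"
        using assms by (intro ball_measure_double_power) simp
      finally show ?thesis .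
    qed
    have "disjoint_family_on (\<lambda>p. ball p (\<epsilon> / 2)) T"
      using T(3) dist_triangle_half_l[of _ _ \<epsilon>]
      unfolding disjoint_family_on_def separated_def by (fastforce simp: dist_commute)
    then have "(\<Sum>p\<in>T. emeasure M (ball p (\<epsilon> / 2))) = emeasure M (\<Union>p\<in>T. ball p (\<epsilon> / 2))"
      using T(1) by (intro sum_emeasure) auto
    also have "\<dots> \<le> emeasure M (ball x0 (R + \<epsilon>))"
      using T(2) assms by (intro emeasure_mono UN_least ball_subset_ball_dist) (force simp: subset_iff)+
    finally have "(\<Sum>p\<in>T. ball_measure p (\<epsilon> / 2)) \<le> ball_measure x0 (R + \<epsilon>)"
      by (simp add: emeasure_ball_eq sum_ennreal ball_measure_nonneg ennreal_le_iff)
    moreover have "real (card T) * ball_measure x0 R \<le> C ^ k * (\<Sum>p\<in>T. ball_measure p (\<epsilon> / 2))"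
      using sum_mono[OF lower] by (simp add: sum_distrib_left)
    ultimately have "real (card T) * ball_measure x0 R \<le> C ^ k * ball_measure x0 (R + \<epsilon>)"
      using C_ge_1 by (smt (verit) mult_left_mono zero_le_power)
    then show ?thesis
      using ball_measure_pos[OF assms(1), of x0] by (simp add: field_simps)
  qed
  then show ?thesis
    using that by blast
qed

lemma ball_covered_by_finite_balls:
  fixes x0 :: 'a
  assumes "0 < \<epsilon>"
  obtains F where "finite F" "ball x0 R \<subseteq> (\<Union>f\<in>F. ball f \<epsilon>)"
proof (cases "0 < R")
  case True
  obtain N where N: "\<And>T. finite T \<Longrightarrow> T \<subseteq> ball x0 R \<Longrightarrow> separated \<epsilon> T \<Longrightarrow> real (card T) \<le> N"
    using card_separated_le[OF True assms] by blast
  show ?thesis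
  proof (rule ccontr)
    assume uncovered: "\<not> ?thesis"
    have "\<exists>T. finite T \<and> T \<subseteq> ball x0 R \<and> separated \<epsilon> T \<and> card T = n" for n
    proof (induction n)
      case (Suc n)
      then obtain T where T: "finite T" "T \<subseteq> ball x0 R" "separated \<epsilon> T" "card T = n"
        by blast
      have "\<not> ball x0 R \<subseteq> (\<Union>f\<in>T. ball f \<epsilon>)"
        using uncovered that T(1) by blast
      then obtain z where z: "z \<in> ball x0 R" "z \<notin> (\<Union>f\<in>T. ball f \<epsilon>)"
        by blast
      then have "z \<notin> T"
        using assms by (metis UN_I centre_in_ball)
      moreover have "separated \<epsilon> (insert z T)"
        using T(3) z(2) unfolding separated_def by (auto simp: dist_commute not_less)
      ultimately show ?case
        using T z(1) by (intro exI[of _ "insert z T"]) simp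
    qed (auto simp: separated_def intro!: exI[of _ "{}"])
    then obtain T where "finite T" "T \<subseteq> ball x0 R" "separated \<epsilon> T" "card T = nat \<lceil>N\<rceil> + 1"
      by blast
    then have "real (card T) \<le> N"
      using N by blast
    moreover have "N \<le> real (nat \<lceil>N\<rceil>)"
      by (rule real_nat_ceiling_ge)
    ultimately show False
      using \<open>card T = nat \<lceil>N\<rceil> + 1\<close> by simp
  qed
next
  case False
  then show ?thesis
    using that[of "{}"] by (simp add: ball_empty)
qed

text \<open>A weak form of the Lebesgue density theorem; it needs only the total boundedness of
  balls, which follows from doubling.\<close>
lemma AE_not_locally_null:
  assumes "T \<in> sets M"
  shows "AE z in M. z \<in> T \<longrightarrow> z \<notin> locally_null M T"
proof -
  fix x0 :: 'a
  have "\<forall>n m. \<exists>F. finite F \<and> ball x0 (real m) \<subseteq> (\<Union>f\<in>F. ball f (1 / Suc n))"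
  proof (intro allI)
    fix n m :: nat
    show "\<exists>F. finite F \<and> ball x0 (real m) \<subseteq> (\<Union>f\<in>F. ball f (1 / Suc n))"
      by (rule ball_covered_by_finite_balls[of "1 / Suc n" x0 "real m"]) auto
  qed
  then have "\<exists>F. \<forall>n m. finite (F n m) \<and> ball x0 (real m) \<subseteq> (\<Union>f\<in>F n m. ball f (1 / Suc n))"
    by (simp only: choice_iff)
  then obtain F where F: "\<And>n m. finite (F n m)"
    "\<And>n m. ball x0 (real m) \<subseteq> (\<Union>f\<in>F n m. ball f (1 / Suc n))"
    by blast
  define N where "N = (\<Union>n m. \<Union>f\<in>{f\<in>F n m. emeasure M (ball f (1 / Suc n) \<inter> T) = 0}.
      ball f (1 / Suc n) \<inter> T)"
  have "N \<in> null_sets M"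
    unfolding N_def using assms F(1)
    by (intro null_sets_UN null_sets_UN') (auto intro: countable_finite simp: null_sets_def)
  moreover have "z \<in> N" if z: "z \<in> T" "z \<in> locally_null M T" for z
  proof -
    obtain r where r: "0 < r" "emeasure M (ball z r \<inter> T) = 0"
      using z(2) by (auto simp: locally_null_def)
    obtain m :: nat where m: "dist x0 z < m"
      using reals_Archimedean2 by blast
    obtain n :: nat where "2 / r < n"
      using reals_Archimedean2 by blast
    then have n: "2 / Suc n < r"
      using r(1) by (simp add: field_simps)
    obtain f where f: "f \<in> F n m" "z \<in> ball f (1 / Suc n)"
      using F(2)[of m n] m by auto
    have "ball f (1 / Suc n) \<subseteq> ball z r"
      using f(2) n by (intro ball_subset_ball_dist) (simp add: dist_commute)
    then have "emeasure M (ball f (1 / Suc n) \<inter> T) \<le> emeasure M (ball z r \<inter> T)"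
      using assms by (intro emeasure_mono) auto
    then have "f \<in> {f \<in> F n m. emeasure M (ball f (1 / Suc n) \<inter> T) = 0}"
      using f(1) r(2) by simp
    then show "z \<in> N"
      unfolding N_def using f(2) z(1) by blast
  qed
  ultimately show ?thesis
    by (intro AE_I'[of N]) (auto simp: space_eq)
qed

lemma AE_not_locally_null_side:
  assumes "E \<in> sets M"
  shows "AE x in M. x \<notin> locally_null M (if x \<in> E then E else - E)"
  using AE_not_locally_null[OF assms] AE_not_locally_null[OF sets_Compl[OF assms]]
  by eventually_elim auto

lemma open_locally_null:
  assumes "T \<in> sets M"
  shows "open (locally_null M T)"
  unfolding open_contains_ball
proof
  fix z assume "z \<in> locally_null M T"
  then obtain r where r: "0 < r" "emeasure M (ball z r \<inter> T) = 0"
    by (auto simp: locally_null_def)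
  have "y \<in> locally_null M T" if "y \<in> ball z r" for y
  proof -
    have "ball y (r - dist z y) \<subseteq> ball z r"
      by (rule ball_subset_ball_dist) simp
    then have "emeasure M (ball y (r - dist z y) \<inter> T) \<le> emeasure M (ball z r \<inter> T)"
      using assms by (intro emeasure_mono) auto
    then show ?thesis
      using r that by (auto simp: locally_null_def intro!: exI[of _ "r - dist z y"])
  qed
  then show "\<exists>r>0. ball z r \<subseteq> locally_null M T"
    using r(1) by blast
qed

lemma locally_null_Compl_disjoint:
  assumes "E \<in> sets M"
  shows "locally_null M E \<inter> locally_null M (- E) = {}"
proof (intro equals0I)
  fix z assume "z \<in> locally_null M E \<inter> locally_null M (- E)"
  then obtain r1 r2 where r: "0 < r1" "emeasure M (ball z r1 \<inter> E) = 0"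
    "0 < r2" "emeasure M (ball z r2 \<inter> - E) = 0"
    by (auto simp: locally_null_def)
  define r where "r = min r1 r2"
  have "emeasure M (ball z r \<inter> E) \<le> emeasure M (ball z r1 \<inter> E)"
    using assms by (intro emeasure_mono) (auto simp: r_def)
  moreover have "emeasure M (ball z r \<inter> - E) \<le> emeasure M (ball z r2 \<inter> - E)"
    using sets_Compl[OF assms] by (intro emeasure_mono) (auto simp: r_def)
  ultimately have "emeasure M (ball z r \<inter> E) = 0" "emeasure M (ball z r \<inter> - E) = 0"
    using r by auto
  moreover have "emeasure M (ball z r) = emeasure M (ball z r \<inter> E) + emeasure M (ball z r \<inter> - E)"
    using assms sets_Compl[OF assms] by (subst plus_emeasure) (auto intro: arg_cong[where f = "emeasure M"])
  moreover have "0 < emeasure M (ball z r)"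
    using r by (intro emeasure_ball_pos) (simp add: r_def)
  ultimately show False
    by simp
qed

lemma reg_boundary_meets_connected:
  assumes "E \<in> sets M" "connected K" "x \<in> K" "y \<in> K" "x \<in> E" "y \<notin> E"
    and "x \<notin> locally_null M E" "y \<notin> locally_null M (- E)"
  shows "K \<inter> reg_boundary M E \<noteq> {}"
  using connected_not_subset_Un_disjoint_open[OF open_locally_null open_locally_null
      locally_null_Compl_disjoint assms(2,3,7,4,8)] assms(1) sets_Compl
  unfolding reg_boundary_eq_locally_null by blast

subsection \<open>Minkowski content and neighbourhoods of the boundary\<close>

lemma emeasure_thickening_le_minkowski_r_content:
  assumes "0 < \<rho>" "minkowski_r_content M t \<rho> A < ennreal K"
  shows "emeasure M (thickening A \<rho>) \<le> ennreal (C * K * \<rho> powr t)"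
proof -
  obtain X where X: "countable X" "X \<subseteq> A" "A \<subseteq> (\<Union>x\<in>X. ball x \<rho>)"
    and XK: "ennreal (\<rho> powr (-t)) * (\<integral>\<^sup>+x. emeasure M (ball x \<rho>) \<partial>count_space X) < ennreal K"
    using assms(2) unfolding minkowski_r_content_def by (auto simp: INF_less_iff)
  define S where "S = (\<integral>\<^sup>+x. emeasure M (ball x \<rho>) \<partial>count_space X)"
  have "0 < ennreal K"
    using XK by (rule le_less_trans[OF zero_le])
  then have K: "0 \<le> K"
    by simp
  have "S = ennreal (\<rho> powr t) * (ennreal (\<rho> powr (-t)) * S)"
    using assms(1) by (simp add: mult.assoc[symmetric] ennreal_mult''[symmetric] powr_add[symmetric])
  also have "\<dots> \<le> ennreal (\<rho> powr t) * ennreal K"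
    using XK by (intro mult_left_mono) (auto simp: S_def)
  finally have S: "S \<le> ennreal (K * \<rho> powr t)"
    using K by (simp add: ennreal_mult'' mult.commute)
  have "thickening A \<rho> \<subseteq> (\<Union>x\<in>X. ball x (2 * \<rho>))"
    unfolding thickening_def
  proof (intro UN_least)
    fix a assume "a \<in> A"
    then obtain x where "x \<in> X" "dist x a < \<rho>"
      using X(3) by auto
    then have "ball a \<rho> \<subseteq> ball x (2 * \<rho>)"
      by (intro ball_subset_ball_dist) simp
    then show "ball a \<rho> \<subseteq> (\<Union>x\<in>X. ball x (2 * \<rho>))"
      using \<open>x \<in> X\<close> by blast
  qed
  then have "emeasure M (thickening A \<rho>) \<le> emeasure M (\<Union>x\<in>X. ball x (2 * \<rho>))"
    by (intro emeasure_mono) (auto intro: sets.countable_UN' X(1))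
  also have "\<dots> \<le> (\<integral>\<^sup>+x. emeasure M (ball x (2 * \<rho>)) \<partial>count_space X)"
    using X(1) by (intro emeasure_countable_Union_le) auto
  also have "\<dots> \<le> (\<integral>\<^sup>+x. ennreal C * emeasure M (ball x \<rho>) \<partial>count_space X)"
    using assms(1) by (intro nn_integral_mono emeasure_ball_double)
  also have "\<dots> = ennreal C * S"
    unfolding S_def by (simp add: nn_integral_cmult)
  also have "\<dots> \<le> ennreal C * ennreal (K * \<rho> powr t)"
    using S by (intro mult_left_mono) auto
  also have "\<dots> = ennreal (C * K * \<rho> powr t)"
    using C_ge_1 K by (simp add: ennreal_mult[symmetric] mult.assoc)
  finally show ?thesis .
qed

lemma emeasure_thickening_le_power:
  assumes "upper_minkowski_content M t A < \<infinity>"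
  obtains K \<rho>0 where "0 < \<rho>0" "0 \<le> K"
    "\<And>\<rho>. 0 < \<rho> \<Longrightarrow> \<rho> < \<rho>0 \<Longrightarrow> emeasure M (thickening A \<rho>) \<le> ennreal (K * \<rho> powr t)"
proof -
  define L where "L = upper_minkowski_content M t A"
  define K where "K = enn2real L + 1"
  have "L < ennreal K"
    using assms unfolding K_def L_def by (cases L) (auto simp: ennreal_less_iff)
  then have "eventually (\<lambda>\<rho>. minkowski_r_content M t \<rho> A < ennreal K) (at_right 0)"
    unfolding L_def upper_minkowski_content_def by (rule Limsup_lessD)
  then obtain \<rho>0 where "0 < \<rho>0"
    "\<And>\<rho>. 0 < \<rho> \<Longrightarrow> \<rho> < \<rho>0 \<Longrightarrow> minkowski_r_content M t \<rho> A < ennreal K"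
    unfolding eventually_at_right_field by auto
  with emeasure_thickening_le_minkowski_r_content show ?thesis
    using that[of \<rho>0 "C * K"] C_ge_1 by (simp add: K_def)
qed

lemma emeasure_thickening_reg_boundary_finite:
  assumes "E \<subseteq> ball x0 R"
  shows "emeasure M (thickening (reg_boundary M E) \<rho>) < \<infinity>"
proof -
  have "reg_boundary M E \<subseteq> ball x0 (R + 1)"
    using reg_boundary_subset_thickening[of 1 M E] thickening_subset_ball[OF assms, of 1] by simp
  then have "thickening (reg_boundary M E) \<rho> \<subseteq> ball x0 (R + 1 + \<rho>)"
    by (rule thickening_subset_ball)
  then have "emeasure M (thickening (reg_boundary M E) \<rho>) \<le> emeasure M (ball x0 (R + 1 + \<rho>))"
    by (intro emeasure_mono) auto
  then show ?thesis
    using emeasure_ball_finite le_less_trans by blast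
qed

end

section \<open>Besov regularity of sets with small boundary\<close>

locale doubling_LLC_space = doubling_metric_measure +
  fixes CL :: real
  assumes CL_ge_1: "1 \<le> CL"
    and LLC: "\<And>(x :: 'a) r y z. y \<in> ball x r \<Longrightarrow> z \<in> ball x r \<Longrightarrow>
      \<exists>K. connected K \<and> y \<in> K \<and> z \<in> K \<and> K \<subseteq> ball x (CL * r)"

lemma doubling_LLC_spaceI:
  fixes M :: "'a::metric_space measure"
  assumes "doubling_metric_measure M C" "LLC1 (UNIV :: 'a set)"
  obtains CL where "doubling_LLC_space M C CL"
proof -
  obtain CL where "1 \<le> CL" and CL: "\<forall>x :: 'a. \<forall>r>0. \<forall>y\<in>ball x r. \<forall>z\<in>ball x r.
      \<exists>K. connected K \<and> y \<in> K \<and> z \<in> K \<and> K \<subseteq> ball x (CL * r)"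
    using assms(2) unfolding LLC1_def by auto
  have "\<exists>K. connected K \<and> y \<in> K \<and> z \<in> K \<and> K \<subseteq> ball x (CL * r)"
    if "y \<in> ball x r" "z \<in> ball x r" for x r and y z :: 'a
  proof -
    have "0 < r"
      using that(1) zero_le_dist[of x y] unfolding mem_ball by linarith
    then show ?thesis
      using CL that by blast
  qed
  with assms(1) \<open>1 \<le> CL\<close> have "doubling_LLC_space M C CL"
    by (simp add: doubling_LLC_space_def doubling_LLC_space_axioms_def)
  then show ?thesis ..
qed

context doubling_LLC_space
begin

text \<open>By LLC-1, a continuum joining \<open>x\<close> to \<open>y\<close> inside \<open>ball x (CL * r)\<close> must
  cross the regularized boundary.\<close>
lemma jump_in_thickening_reg_boundary:
  assumes "E \<in> sets M"
    and "x \<notin> locally_null M (if x \<in> E then E else - E)"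
    and "y \<notin> locally_null M (if y \<in> E then E else - E)"
    and "x \<in> E \<longleftrightarrow> y \<notin> E" "dist x y < r"
  shows "x \<in> thickening (reg_boundary M E) (CL * r)"
proof -
  have "0 < r"
    using assms(5) zero_le_dist[of x y] by linarith
  then have "x \<in> ball x r" "y \<in> ball x r"
    using assms(5) by auto
  then obtain K where K: "connected K" "x \<in> K" "y \<in> K" "K \<subseteq> ball x (CL * r)"
    using LLC by blast
  have "K \<inter> reg_boundary M E \<noteq> {}"
  proof (cases "x \<in> E")
    case True
    then show ?thesis
      using reg_boundary_meets_connected[OF assms(1) K(1-3)] assms(2-4) by simp
  next
    case False
    then show ?thesis
      using reg_boundary_meets_connected[OF sets_Compl[OF assms(1)] K(1-3)] assms(2-4)
      by (simp add: reg_boundary_Compl)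
  qed
  then obtain z where "z \<in> reg_boundary M E" "dist x z < CL * r"
    using K(4) by (auto simp: subset_iff)
  then show ?thesis
    unfolding thickening_def by (auto simp: dist_commute)
qed

lemma jump_integral_le_outside_thickening:
  assumes "E \<in> sets M" "0 < s" "0 < r"
    and "x \<notin> locally_null M (if x \<in> E then E else - E)"
    and "x \<notin> thickening (reg_boundary M E) (CL * r)"
  shows "jump_integral E s x \<le> ennreal (C * r powr (-s) / (1 - 2 powr (-s)))"
proof -
  have "AE y in M. ennreal (\<bar>indicator E y - indicator E x\<bar> * besov_weight s x (dist x y))
      \<le> indicator (- ball x r) y * ennreal (besov_weight s x (dist x y))"
    using AE_not_locally_null_side[OF assms(1)]
  proof eventually_elim
    case (elim y)
    show ?case
    proof (cases "x \<in> E \<longleftrightarrow> y \<notin> E")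
      case True
      then have "r \<le> dist x y"
        using jump_in_thickening_reg_boundary[OF assms(1,4) elim True] assms(5) by force
      then show ?thesis
        using True by (auto simp: indicator_def)
    qed (auto simp: indicator_def)
  qed
  then have "jump_integral E s x
      \<le> (\<integral>\<^sup>+y. indicator (- ball x r) y * ennreal (besov_weight s x (dist x y)) \<partial>M)"
    unfolding jump_integral_def by (rule nn_integral_mono_AE)
  also have "\<dots> \<le> ennreal (C * r powr (-s) / (1 - 2 powr (-s)))"
    using assms(3,2) by (rule nn_integral_besov_weight_tail)
  finally show ?thesis .
qed

lemma jump_integral_le_layers:
  assumes "E \<in> sets M" "0 < s"
    and "x \<notin> locally_null M (if x \<in> E then E else - E)"
    and "x \<in> thickening (reg_boundary M E) CL"
  shows "jump_integral E s x
    \<le> ennreal (C * 2 powr s / (1 - 2 powr (-s)))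
      * (\<Sum>k. ennreal ((2 ^ k) powr s) * indicator (thickening (reg_boundary M E) (CL / 2 ^ k)) x)"
    (is "jump_integral E s x \<le> ennreal ?A * ?S")
proof -
  let ?W = "\<lambda>k::nat. thickening (reg_boundary M E) (CL / 2 ^ k)"
  have "2 powr (-s) < 1"
    using assms(2) by (intro powr_less_one) auto
  then have A: "0 < ?A"
    using C_ge_1 by simp
  show ?thesis
  proof (cases "\<forall>k. x \<in> ?W k")
    case True
    then have "?S = (\<Sum>k. ennreal ((2 ^ k) powr s))"
      by simp
    also have "\<dots> = \<infinity>"
      using assms(2) by (intro suminf_ennreal_ge_one_eq_top ge_one_powr_ge_zero) auto
    finally have "?S = \<infinity>" .
    moreover have "ennreal ?A \<noteq> 0"
      using A ennreal_eq_0_iff[of ?A] not_le by blast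
    ultimately have "ennreal ?A * ?S = \<infinity>"
      by (simp add: ennreal_mult_top)
    then show ?thesis
      by simp
  next
    case False
    moreover have "x \<in> ?W 0"
      using assms(4) by simp
    ultimately obtain n where n: "x \<in> ?W n" "x \<notin> ?W (Suc n)"
      using exists_least_lemma[where P = "\<lambda>k. x \<notin> ?W k"] by blast
    have "jump_integral E s x \<le> ennreal (C * (1 / 2 ^ Suc n) powr (-s) / (1 - 2 powr (-s)))"
      using n(2) by (intro jump_integral_le_outside_thickening[OF assms(1,2) _ assms(3)]) auto
    also have "(1 / 2 ^ Suc n) powr (-s) = 2 powr s * (2 ^ n) powr s"
      by (simp add: powr_minus_divide powr_divide powr_mult powr_power2)
    also have "C * (2 powr s * (2 ^ n) powr s) / (1 - 2 powr (-s)) = ?A * (2 ^ n) powr s"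
      by simp
    also have "ennreal (?A * (2 ^ n) powr s) = ennreal ?A * (ennreal ((2 ^ n) powr s) * indicator (?W n) x)"
      using n(1) A ennreal_mult'[of ?A "(2 ^ n) powr s"] by simp
    also have "\<dots> \<le> ennreal ?A * ?S"
      by (intro mult_left_mono ennreal_le_suminf) simp
    finally show ?thesis .
  qed
qed

lemma AE_jump_integral_le:
  assumes "E \<in> sets M" "E \<subseteq> ball x0 R" "0 < s"
  defines "A \<equiv> C / (1 - 2 powr (-s))"
  shows "AE x in M. jump_integral E s x
    \<le> ennreal (A * 2 powr s)
        * (\<Sum>k. ennreal ((2 ^ k) powr s) * indicator (thickening (reg_boundary M E) (CL / 2 ^ k)) x)
      + ennreal A * indicator (ball x0 (2 * R)) x
      + ennreal (2 powr s * C\<^sup>2) * emeasure M E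
        * (indicator (- ball x0 (2 * R)) x * ennreal (besov_weight s x0 (dist x0 x)))"
  using AE_not_locally_null_side[OF assms(1)]
proof eventually_elim
  case (elim x)
  consider "2 * R \<le> dist x0 x"
    | "dist x0 x < 2 * R" "x \<notin> thickening (reg_boundary M E) CL"
    | "x \<in> thickening (reg_boundary M E) CL"
    by force
  then show ?case
  proof cases
    case 1
    then have "jump_integral E s x \<le> ennreal (2 powr s * C\<^sup>2) * emeasure M E
        * (indicator (- ball x0 (2 * R)) x * ennreal (besov_weight s x0 (dist x0 x)))"
      using jump_integral_far_le[OF assms(1,2) 1] assms(3) C_ge_1
      by (simp add: ennreal_mult' besov_weight_nonneg ac_simps)
    then show ?thesis
      by (simp add: add_increasing)
  next
    case 2
    then have "jump_integral E s x \<le> ennreal A * indicator (ball x0 (2 * R)) x"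
      using jump_integral_le_outside_thickening[OF assms(1,3) _ elim, of 1] by (simp add: A_def)
    then show ?thesis
      by (simp add: add_increasing2 add_increasing)
  next
    case 3
    then have "jump_integral E s x \<le> ennreal (A * 2 powr s)
        * (\<Sum>k. ennreal ((2 ^ k) powr s) * indicator (thickening (reg_boundary M E) (CL / 2 ^ k)) x)"
      using jump_integral_le_layers[OF assms(1,3) elim] by (simp add: A_def)
    then show ?thesis
      by (simp add: add_increasing2 add.assoc)
  qed
qed

lemma besov_norm_indicator_finite:
  assumes "E \<in> sets M" "bounded E" "0 < s" "s < t"
    and "upper_minkowski_content M t (reg_boundary M E) < \<infinity>"
  shows "besov_norm M s (indicator E) < \<infinity>"
proof -
  obtain x0 R where R: "0 < R" "E \<subseteq> ball x0 R"
    using assms(2) bounded_subset_ballD by blast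
  define A where "A = C / (1 - 2 powr (-s))"
  define W where "W k = thickening (reg_boundary M E) (CL / 2 ^ k)" for k :: nat
  define S where "S x = (\<Sum>k. ennreal ((2 ^ k) powr s) * indicator (W k) x)" for x
  define G where "G x = indicator (- ball x0 (2 * R)) x * ennreal (besov_weight s x0 (dist x0 x))"
    for x
  have [measurable]: "W k \<in> sets M" for k
    by (simp add: W_def sets_open open_thickening)
  have S_meas: "S \<in> borel_measurable M"
    unfolding S_def by measurable
  have G_meas: "G \<in> borel_measurable M"
    unfolding G_def
    by (rule borel_measurable_times_ennreal[OF borel_measurable_indicator[OF sets_Compl[OF sets_ball]]
          measurable_compose[OF borel_measurable_besov_weight_dist measurable_ennreal]])
  have "besov_norm M s (indicator E) \<le> (\<integral>\<^sup>+x. ennreal (A * 2 powr s) * S x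
      + ennreal A * indicator (ball x0 (2 * R)) x + ennreal (2 powr s * C\<^sup>2) * emeasure M E * G x \<partial>M)"
    unfolding besov_norm_eq_weight jump_integral_def[symmetric] S_def G_def W_def A_def
    using AE_jump_integral_le[OF assms(1) R(2) assms(3)] by (rule nn_integral_mono_AE)
  also have "\<dots> = ennreal (A * 2 powr s) * (\<integral>\<^sup>+x. S x \<partial>M) + ennreal A * emeasure M (ball x0 (2 * R))
      + ennreal (2 powr s * C\<^sup>2) * emeasure M E * (\<integral>\<^sup>+x. G x \<partial>M)"
    using S_meas G_meas by (simp add: nn_integral_add nn_integral_cmult)
  also have "\<dots> < \<infinity>"
  proof -
    obtain \<rho>0 K where "0 < \<rho>0" "0 \<le> K"
      "\<And>\<rho>. 0 < \<rho> \<Longrightarrow> \<rho> < \<rho>0 \<Longrightarrow> emeasure M (thickening (reg_boundary M E) \<rho>) \<le> ennreal (K * \<rho> powr t)"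
      by (rule emeasure_thickening_le_power[OF assms(5)]) blast
    then have "(\<Sum>k. ennreal ((2 ^ k) powr s) * emeasure M (W k)) < \<infinity>"
      unfolding W_def using assms(4) CL_ge_1 emeasure_thickening_reg_boundary_finite[OF R(2)]
      by (intro suminf_dyadic_layers_finite) auto
    moreover have "(\<integral>\<^sup>+x. S x \<partial>M) = (\<Sum>k. ennreal ((2 ^ k) powr s) * emeasure M (W k))"
      unfolding S_def by (subst nn_integral_suminf) (auto simp: nn_integral_cmult_indicator)
    moreover have "(\<integral>\<^sup>+x. G x \<partial>M) < \<infinity>"
      unfolding G_def using nn_integral_besov_weight_tail[of "2 * R" s x0] R(1) assms(3)
      by (auto intro: le_less_trans)
    moreover have "emeasure M E < \<infinity>"
      using R(2) by (rule emeasure_subset_ball_finite)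
    ultimately show ?thesis
      using emeasure_ball_finite[of x0 "2 * R"] by (simp add: ennreal_mult_less_top less_top)
  qed
  finally show ?thesis .
qed

lemma in_besov_indicator:
  assumes "E \<in> sets M" "bounded E" "0 < s" "s < t"
    and "upper_minkowski_content M t (reg_boundary M E) < \<infinity>"
  shows "in_besov M s (indicator E)"
proof -
  obtain x0 R where "E \<subseteq> ball x0 R"
    using assms(2) bounded_subset_ballD by blast
  then have "emeasure M E < \<infinity>"
    by (rule emeasure_subset_ball_finite)
  then show ?thesis
    using assms besov_norm_indicator_finite
    by (simp add: in_besov_def integrable_indicator_iff space_eq)
qed

end

theorem theorem1p1:
  fixes M :: "'a::metric_space measure" and E :: "'a set" and t :: real
  assumes "LLC1 (UNIV :: 'a set)"
    and "doubling_measure M"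
    and "borel_regular M"
    and "bounded E" and "E \<in> sets M"
    and "t > 0"
    and "upper_minkowski_content M t (reg_boundary M E) < \<infinity>"
  shows "\<forall>s. 0 < s \<and> s < 1 \<and> s < t \<longrightarrow> in_besov M s (indicator E :: 'a \<Rightarrow> real)"
proof -
  obtain C where "doubling_metric_measure M C"
    using doubling_metric_measureI assms(2,3) by blast
  then obtain CL where "doubling_LLC_space M C CL"
    using doubling_LLC_spaceI assms(1) by blast
  then show ?thesis
    using doubling_LLC_space.in_besov_indicator assms(4,5,7) by blast
qed

end
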